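(* Let $V$ be a real sequence and suppose that for some $a>1$, $b>1$, the equation $(-\Delta+V)\psi=0$ has a solution $\psi^-$ with $a^{n^b}\psi^-_n\to1$ as $n\to\infty$. Then: (i) every solution $\psi$ linearly independent of $\psi^-$ increases rapidly as $n\to\infty$, but $a^{-n^b}\psi_n\to0$; (ii) for any solution $\psi$, the product $\psi_n\psi^-_n$ is bounded independently of $n$; (iii) given any boundary condition $c\psi_1+d\psi_2=0$, if $0\notin\mathrm{sp}(-\Delta+V)$, then the Green matrix of $-\Delta+V$ on $n\ge1$ is uniformly bounded.
   Context: $(\Delta f)_n=f_{n+1}+f_{n-1}-2f_n$; $(-\Delta+V)\psi=0$ means $-\psi_{n+1}-\psi_{n-1}+(2+V_n)\psi_n=0$ for $n\ge1$. The Green matrix with the given boundary condition is $G_{mn}=\psi^+_{\min(m,n)}\psi^-_{\max(m,n)}/W$, where $\psi^+$ satisfies the boundary condition and $W=\psi^-_n\psi^+_{n+1}-\psi^-_{n+1}\psi^+_n$. *)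

theory Defs
  imports "HOL-Analysis.Analysis"
begin

text \<open>Sequences are functions nat => real; the equation (-Delta+V) psi = 0 is imposed
  for n >= 1 (so it involves psi 0), as in the paper's context.\<close>

definition schr_op :: "(nat \<Rightarrow> real) \<Rightarrow> (nat \<Rightarrow> real) \<Rightarrow> nat \<Rightarrow> real" where
  "schr_op V f n = - f (n + 1) - f (n - 1) + (2 + V n) * f n"

definition is_solution :: "(nat \<Rightarrow> real) \<Rightarrow> (nat \<Rightarrow> real) \<Rightarrow> bool" where
  "is_solution V \<psi> \<longleftrightarrow> (\<forall>n\<ge>1. schr_op V \<psi> n = 0)"

text \<open>Wronskian W = psi^-_n psi^+_(n+1) - psi^-_(n+1) psi^+_n (constant in n for solutions;
  evaluated at n = 1) and the Green matrix G_mn = psi^+_min(m,n) psi^-_max(m,n) / W.\<close>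

definition wronskian :: "(nat \<Rightarrow> real) \<Rightarrow> (nat \<Rightarrow> real) \<Rightarrow> real" where
  "wronskian \<psi>m \<psi>p = \<psi>m 1 * \<psi>p 2 - \<psi>m 2 * \<psi>p 1"

definition green_matrix :: "(nat \<Rightarrow> real) \<Rightarrow> (nat \<Rightarrow> real) \<Rightarrow> nat \<Rightarrow> nat \<Rightarrow> real" where
  "green_matrix \<psi>p \<psi>m m n = \<psi>p (min m n) * \<psi>m (max m n) / wronskian \<psi>m \<psi>p"

definition l2_half :: "(nat \<Rightarrow> real) \<Rightarrow> bool" where
  "l2_half f \<longleftrightarrow> summable (\<lambda>n. (f (n + 1))\<^sup>2)"

definition l2_normsq :: "(nat \<Rightarrow> real) \<Rightarrow> real" where
  "l2_normsq f = (\<Sum>n. (f (n + 1))\<^sup>2)"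

text \<open>Boundary condition c psi_1 + d psi_2 = 0, imposed on a domain element f
  with psi_2 replaced by the value the homogeneous recursion at n = 1 gives,
  (2 + V 1) f 1 - f 0.  For solutions of the homogeneous equation this is exactly
  c psi 1 + d psi 2 = 0.\<close>

definition bc_holds :: "(nat \<Rightarrow> real) \<Rightarrow> real \<Rightarrow> real \<Rightarrow> (nat \<Rightarrow> real) \<Rightarrow> bool" where
  "bc_holds V c d f \<longleftrightarrow> c * f 1 + d * ((2 + V 1) * f 1 - f 0) = 0"

text \<open>0 is not in the spectrum of the half-line operator -Delta+V on l2(n>=1) with this
  boundary condition: the operator is injective, surjective onto l2, with bounded inverse.\<close>

definition zero_notin_spectrum :: "(nat \<Rightarrow> real) \<Rightarrow> real \<Rightarrow> real \<Rightarrow> bool" where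
  "zero_notin_spectrum V c d \<longleftrightarrow>
     (\<forall>f. l2_half f \<and> bc_holds V c d f \<and> (\<forall>n\<ge>1. schr_op V f n = 0) \<longrightarrow> (\<forall>n\<ge>1. f n = 0)) \<and>
     (\<exists>C. \<forall>g. l2_half g \<longrightarrow>
        (\<exists>f. l2_half f \<and> bc_holds V c d f \<and> (\<forall>n\<ge>1. schr_op V f n = g n) \<and>
             l2_normsq f \<le> C * l2_normsq g))"

end

theory Submission
  imports Defs "HOL-Real_Asymp.Real_Asymp"
begin

text \<open>Write \<open>\<psi>m = u / e\<close> with \<open>e n = a powr (n powr b)\<close> and \<open>u \<longlonglongrightarrow> 1\<close>; all that is used about \<open>e\<close>
  is that it is positive, increasing, and \<open>e n / e (n + 1) \<longlonglongrightarrow> 0\<close>. For a solution \<open>\<psi>\<close> with Wronskian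
  \<open>W\<close>, the quotient \<open>r = \<psi> / \<psi>m\<close> has increments \<open>W / (\<psi>m n * \<psi>m (n + 1)) = O(e n * e (n + 1))\<close>.
  These grow faster than geometrically, so \<open>r (n + 1)\<close> is dominated by its last increment and
  \<open>\<psi> (n + 1) = O(1 / e (n + 1) + e n) = o(e (n + 1))\<close>. This gives \<open>\<psi> / e \<longlonglongrightarrow> 0\<close> and a bound on
  \<open>\<psi> i * \<psi>m j\<close> for \<open>i \<le> j\<close>, hence on the Green matrix. Finally
  \<open>\<psi>m n * \<psi> (n + 1) = W + \<psi>m (n + 1) * \<psi> n \<longlonglongrightarrow> W\<close>, so \<open>\<psi> (n + 1) \<sim> W * e n\<close>, and \<open>W \<noteq> 0\<close> when
  \<open>\<psi>\<close> is independent of \<open>\<psi>m\<close>.\<close>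

lemma is_solution_step:
  assumes "is_solution V f"
  shows "f (Suc (Suc n)) = (2 + V (Suc n)) * f (Suc n) - f n"
  using assms unfolding is_solution_def schr_op_def
  by (auto dest!: spec[of _ "Suc n"] simp: algebra_simps)

lemma is_solution_lincomb:
  assumes "is_solution V f" and "is_solution V g"
  shows "is_solution V (\<lambda>n. \<alpha> * f n + \<beta> * g n)"
proof -
  have "schr_op V (\<lambda>n. \<alpha> * f n + \<beta> * g n) n = \<alpha> * schr_op V f n + \<beta> * schr_op V g n" for n
    by (simp add: schr_op_def algebra_simps)
  then show ?thesis using assms by (simp add: is_solution_def)
qed

lemma solution_eq_0_if_consecutive_zeros:
  assumes sol: "is_solution V f" and "f j = 0" and "f (Suc j) = 0"
  shows "f n = 0"
proof -
  have shift: "f k = 0 \<and> f (Suc k) = 0 \<longleftrightarrow> f (Suc k) = 0 \<and> f (Suc (Suc k)) = 0" for k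
    using is_solution_step[OF sol, of k] by auto
  have "f n = 0 \<and> f (Suc n) = 0"
  proof (cases "j \<le> n")
    case True
    then show ?thesis by (induction n rule: dec_induct) (use assms shift in auto)
  next
    case False
    then have "n \<le> j" by simp
    then show ?thesis by (induction n rule: inc_induct) (use assms shift in auto)
  qed
  then show ?thesis ..
qed

lemma wronskian_const:
  assumes "is_solution V f" and "is_solution V g"
  shows "f n * g (Suc n) - f (Suc n) * g n = wronskian f g"
proof -
  have step: "f (Suc n) * g (Suc (Suc n)) - f (Suc (Suc n)) * g (Suc n)
            = f n * g (Suc n) - f (Suc n) * g n" for n
    by (simp add: is_solution_step[OF assms(1)] is_solution_step[OF assms(2)] algebra_simps)
  have "f n * g (Suc n) - f (Suc n) * g n = f 0 * g 1 - f 1 * g 0" for n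
    by (induction n) (use step in auto)
  moreover have "wronskian f g = f 0 * g 1 - f 1 * g 0"
    using step[of 0] by (simp add: wronskian_def numeral_2_eq_2)
  ultimately show ?thesis by simp
qed

lemma solution_proportional_if_wronskian_eq_0:
  assumes f: "is_solution V f" and g: "is_solution V g"
    and W: "wronskian f g = 0" and fj: "f j \<noteq> 0"
  shows "g n = g j / f j * f n"
proof -
  define \<phi> where "\<phi> n = g n - g j / f j * f n" for n
  have "is_solution V \<phi>"
    using is_solution_lincomb[OF g f, of 1 "- g j / f j"] by (simp add: \<phi>_def[abs_def])
  moreover have "\<phi> j = 0" using fj by (simp add: \<phi>_def)
  moreover have "\<phi> (Suc j) = 0"
    using wronskian_const[OF f g, of j] W fj by (simp add: \<phi>_def field_simps)
  ultimately have "\<phi> n = 0" by (rule solution_eq_0_if_consecutive_zeros)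
  then show ?thesis by (simp add: \<phi>_def)
qed

lemma wronskian_quotient_increment:
  assumes "is_solution V f" and "is_solution V g"
    and "f n \<noteq> 0" and "f (Suc n) \<noteq> 0"
  shows "g (Suc n) / f (Suc n) - g n / f n = wronskian f g / (f n * f (Suc n))"
  using assms(3,4) wronskian_const[OF assms(1,2), of n, symmetric] by (simp add: field_simps)

lemma green_matrix_abs_le:
  assumes "\<And>i j. i \<le> j \<Longrightarrow> \<bar>\<psi>p i * \<psi>m j\<bar> \<le> K"
  shows "\<bar>green_matrix \<psi>p \<psi>m m n\<bar> \<le> K / \<bar>wronskian \<psi>m \<psi>p\<bar>"
  unfolding green_matrix_def abs_divide
  by (intro divide_right_mono assms) auto

lemma div_power_at_top_if_ratio_tendsto_0:
  fixes f :: "nat \<Rightarrow> real"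
  assumes pos: "\<And>n. f n > 0" and ratio: "(\<lambda>n. f n / f (Suc n)) \<longlonglongrightarrow> 0" and C: "C > 0"
  shows "filterlim (\<lambda>n. f n / C ^ n) at_top sequentially"
proof -
  define g where "g n = C ^ n / f n" for n
  obtain N where N: "\<And>n. n \<ge> N \<Longrightarrow> f n / f (Suc n) < 1 / (2 * C)"
    using order_tendstoD(2)[OF ratio, of "1 / (2 * C)"] C by (auto simp: eventually_sequentially)
  have "norm (g (Suc n)) \<le> 1 / 2 * norm (g n)" if "n \<ge> N" for n
  proof -
    have "g (Suc n) = C * (f n / f (Suc n)) * g n"
      using pos[of n] pos[of "Suc n"] by (simp add: g_def field_simps)
    also have "\<dots> \<le> C * (1 / (2 * C)) * g n"
      using N[OF that] pos[of n] C by (intro mult_right_mono mult_left_mono) (auto simp: g_def)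
    finally show ?thesis using C pos[of n] pos[of "Suc n"] by (simp add: g_def)
  qed
  then have "g \<longlonglongrightarrow> 0" by (intro summable_LIMSEQ_zero summable_ratio_test[of "1/2" N]) auto
  then have "filterlim (\<lambda>n. inverse (g n)) at_top sequentially"
    by (rule filterlim_inverse_at_top) (use pos C in \<open>simp add: g_def\<close>)
  then show ?thesis by (simp add: g_def)
qed

lemma abs_le_if_increments_geometric:
  fixes r e :: "nat \<Rightarrow> real"
  assumes incr: "\<And>n. n \<ge> N \<Longrightarrow> \<bar>r (Suc n) - r n\<bar> \<le> c * (e n * e (Suc n))"
    and grow: "\<And>n. n \<ge> N \<Longrightarrow> 4 * e n \<le> e (Suc n)"
    and c: "c \<ge> 0" and e: "\<And>n. e n \<ge> 0"
    and "n \<ge> N"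
  shows "\<bar>r (Suc n)\<bar> \<le> \<bar>r (Suc N)\<bar> + 2 * c * (e n * e (Suc n))"
  using \<open>n \<ge> N\<close>
proof (induction n rule: dec_induct)
  case base
  show ?case using c e by simp
next
  case (step n)
  have "2 * e n \<le> e (Suc (Suc n))"
    using grow[of n] grow[of "Suc n"] step.hyps e[of n] by linarith
  then have "2 * (e n * e (Suc n)) \<le> e (Suc n) * e (Suc (Suc n))"
    using e[of "Suc n"] by (metis mult.assoc mult.commute mult_right_mono)
  then have "2 * c * (e n * e (Suc n)) \<le> c * (e (Suc n) * e (Suc (Suc n)))"
    using c by (metis mult.assoc mult.commute mult_left_mono)
  moreover have "\<bar>r (Suc (Suc n))\<bar> \<le> \<bar>r (Suc n)\<bar> + c * (e (Suc n) * e (Suc (Suc n)))"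
    using incr[of "Suc n"] step.hyps by linarith
  ultimately show ?case using step.IH by linarith
qed

locale decaying_solution =
  fixes V \<psi>m e :: "nat \<Rightarrow> real"
  assumes solution: "is_solution V \<psi>m"
    and e_pos: "\<And>n. e n > 0"
    and e_mono: "mono e"
    and e_ratio: "(\<lambda>n. e n / e (Suc n)) \<longlonglongrightarrow> 0"
    and normalized: "(\<lambda>n. e n * \<psi>m n) \<longlonglongrightarrow> 1"
begin

lemma e_div_power_at_top: "C > 0 \<Longrightarrow> filterlim (\<lambda>n. e n / C ^ n) at_top sequentially"
  using div_power_at_top_if_ratio_tendsto_0[OF e_pos e_ratio] .

lemma e_at_top: "filterlim e at_top sequentially"
  using e_div_power_at_top[of 1] by simp

lemma eventually_decaying_bounds:
  "\<forall>\<^sub>F n in sequentially.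
     \<psi>m n \<noteq> 0 \<and> 1 / \<bar>\<psi>m n\<bar> \<le> 2 * e n \<and> \<bar>\<psi>m n\<bar> \<le> 2 / e n \<and> 4 * e n \<le> e (Suc n)"
proof -
  have L: "(\<lambda>n. \<bar>e n * \<psi>m n\<bar>) \<longlonglongrightarrow> 1"
    using tendsto_rabs[OF normalized] by simp
  have "\<forall>\<^sub>F n in sequentially. 1 / 2 < \<bar>e n * \<psi>m n\<bar> \<and> \<bar>e n * \<psi>m n\<bar> < 2"
    using eventually_conj[OF order_tendstoD(1)[OF L, of "1/2"] order_tendstoD(2)[OF L, of 2]] by simp
  moreover have "\<forall>\<^sub>F n in sequentially. e n / e (Suc n) < 1 / 4"
    using order_tendstoD(2)[OF e_ratio, of "1/4"] by simp
  ultimately show ?thesis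
  proof eventually_elim
    case (elim n)
    then have "\<bar>\<psi>m n\<bar> > 0" by auto
    then show ?case
      using elim e_pos[of n] e_pos[of "Suc n"]
      by (auto simp: abs_mult field_simps)
  qed
qed

context
  fixes \<psi> :: "nat \<Rightarrow> real"
  assumes sol: "is_solution V \<psi>"
begin

lemma solution_growth_bound:
  obtains R where "\<forall>\<^sub>F n in sequentially.
    \<bar>\<psi> (Suc n)\<bar> \<le> R / e (Suc n) + 16 * \<bar>wronskian \<psi>m \<psi>\<bar> * e n"
proof -
  let ?W = "\<bar>wronskian \<psi>m \<psi>\<bar>"
  define r where "r n = \<psi> n / \<psi>m n" for n
  obtain N where N: "\<And>n. n \<ge> N \<Longrightarrow>
      \<psi>m n \<noteq> 0 \<and> 1 / \<bar>\<psi>m n\<bar> \<le> 2 * e n \<and> \<bar>\<psi>m n\<bar> \<le> 2 / e n \<and> 4 * e n \<le> e (Suc n)"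
    using eventually_decaying_bounds by (auto simp: eventually_sequentially)
  have incr: "\<bar>r (Suc n) - r n\<bar> \<le> 4 * ?W * (e n * e (Suc n))" if "n \<ge> N" for n
  proof -
    have "\<bar>r (Suc n) - r n\<bar> = ?W * (1 / \<bar>\<psi>m n\<bar>) * (1 / \<bar>\<psi>m (Suc n)\<bar>)"
      using wronskian_quotient_increment[OF solution sol] N[of n] N[of "Suc n"] that
      by (simp add: r_def abs_mult)
    also have "\<dots> \<le> ?W * (2 * e n) * (2 * e (Suc n))"
      using N[of n] N[of "Suc n"] that e_pos[of n]
      by (intro mult_mono) (auto intro: mult_left_mono)
    finally show ?thesis by (simp add: algebra_simps)
  qed
  have "\<bar>\<psi> (Suc n)\<bar> \<le> 2 * \<bar>r (Suc N)\<bar> / e (Suc n) + 16 * ?W * e n" if "n \<ge> N" for n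
  proof -
    have "\<bar>\<psi>m (Suc n)\<bar> \<le> 2 / e (Suc n)"
      using N[of "Suc n"] that by simp
    moreover have "\<bar>r (Suc n)\<bar> \<le> \<bar>r (Suc N)\<bar> + 8 * ?W * (e n * e (Suc n))"
      using abs_le_if_increments_geometric[of N r "4 * ?W" e, OF incr] N that e_pos
      by (simp add: less_imp_le)
    ultimately have "\<bar>\<psi>m (Suc n)\<bar> * \<bar>r (Suc n)\<bar>
        \<le> 2 / e (Suc n) * (\<bar>r (Suc N)\<bar> + 8 * ?W * (e n * e (Suc n)))"
      by (rule mult_mono) (use e_pos[of "Suc n"] in simp_all)
    moreover have "\<bar>\<psi> (Suc n)\<bar> = \<bar>\<psi>m (Suc n)\<bar> * \<bar>r (Suc n)\<bar>"
      using N[of "Suc n"] that by (simp add: r_def)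
    ultimately show ?thesis using e_pos[of "Suc n"] by (simp add: field_simps)
  qed
  then show ?thesis by (intro that) (auto simp: eventually_sequentially)
qed

lemma solution_div_e_tendsto_0: "(\<lambda>n. \<psi> n / e n) \<longlonglongrightarrow> 0"
proof -
  obtain R where R: "\<forall>\<^sub>F n in sequentially.
      \<bar>\<psi> (Suc n)\<bar> \<le> R / e (Suc n) + 16 * \<bar>wronskian \<psi>m \<psi>\<bar> * e n"
    using solution_growth_bound by blast
  have "(\<lambda>n. 1 / e n) \<longlonglongrightarrow> 0"
    using tendsto_inverse_0_at_top[OF e_at_top] by (simp add: divide_inverse)
  then have inv_e: "(\<lambda>n. 1 / e (Suc n)) \<longlonglongrightarrow> 0" by (rule LIMSEQ_Suc)
  have "(\<lambda>n. R * (1 / e (Suc n))\<^sup>2 + 16 * \<bar>wronskian \<psi>m \<psi>\<bar> * (e n / e (Suc n))) \<longlonglongrightarrow> 0"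
    by (intro tendsto_add_zero tendsto_mult_right_zero tendsto_power_zero e_ratio inv_e)
      (use inv_e in simp_all)
  then have "(\<lambda>n. \<psi> (Suc n) / e (Suc n)) \<longlonglongrightarrow> 0"
  proof (rule Lim_null_comparison[rotated])
    show "\<forall>\<^sub>F n in sequentially. norm (\<psi> (Suc n) / e (Suc n))
        \<le> R * (1 / e (Suc n))\<^sup>2 + 16 * \<bar>wronskian \<psi>m \<psi>\<bar> * (e n / e (Suc n))"
      using R
    proof eventually_elim
      case (elim n)
      have E: "e (Suc n) > 0" by (rule e_pos)
      have "\<bar>\<psi> (Suc n)\<bar> / e (Suc n)
          \<le> (R / e (Suc n) + 16 * \<bar>wronskian \<psi>m \<psi>\<bar> * e n) / e (Suc n)"
        using elim E by (simp add: divide_right_mono)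
      also have "\<dots> = R * (1 / e (Suc n))\<^sup>2 + 16 * \<bar>wronskian \<psi>m \<psi>\<bar> * (e n / e (Suc n))"
        using E by (simp add: field_simps power2_eq_square)
      finally show ?case using E by (simp add: abs_divide)
    qed
  qed
  then show ?thesis by (rule LIMSEQ_imp_Suc)
qed

lemma solution_times_decaying_bounded: "\<exists>K. \<forall>i j. i \<le> j \<longrightarrow> \<bar>\<psi> i * \<psi>m j\<bar> \<le> K"
proof -
  obtain K1 where "K1 > 0" and K1: "\<forall>n. norm (\<psi> n / e n) \<le> K1"
    using convergent_imp_Bseq[OF convergentI[OF solution_div_e_tendsto_0]] BseqE by blast
  obtain K2 where "K2 > 0" and K2: "\<forall>n. norm (e n * \<psi>m n) \<le> K2"
    using convergent_imp_Bseq[OF convergentI[OF normalized]] BseqE by blast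
  have "\<bar>\<psi> i * \<psi>m j\<bar> \<le> K1 * K2" if "i \<le> j" for i j
  proof -
    have ratio: "0 < e i / e j" "e i / e j \<le> 1"
      using e_pos[of i] e_pos[of j] monoD[OF e_mono that] by auto
    have "\<bar>\<psi> i * \<psi>m j\<bar> = \<bar>\<psi> i / e i\<bar> * \<bar>e j * \<psi>m j\<bar> * (e i / e j)"
      using e_pos[of i] e_pos[of j] by (simp add: abs_mult abs_divide field_simps)
    also have "\<dots> \<le> K1 * K2 * 1"
      using K1 K2 ratio \<open>K1 > 0\<close> \<open>K2 > 0\<close> by (intro mult_mono) auto
    finally show ?thesis by simp
  qed
  then show ?thesis by blast
qed

lemma solution_next_div_e_tendsto_wronskian:
  "(\<lambda>n. \<psi> (Suc n) / e n) \<longlonglongrightarrow> wronskian \<psi>m \<psi>"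
proof -
  have "(\<lambda>n. \<psi> n / e n * (e (Suc n) * \<psi>m (Suc n)) * (e n / e (Suc n))) \<longlonglongrightarrow> 0 * 1 * 0"
    by (intro tendsto_mult solution_div_e_tendsto_0 LIMSEQ_Suc[OF normalized] e_ratio)
  moreover have "\<psi> n / e n * (e (Suc n) * \<psi>m (Suc n)) * (e n / e (Suc n)) = \<psi>m (Suc n) * \<psi> n" for n
    using e_pos[of n] e_pos[of "Suc n"] by (simp add: field_simps)
  ultimately have "(\<lambda>n. \<psi>m (Suc n) * \<psi> n) \<longlonglongrightarrow> 0" by simp
  then have "(\<lambda>n. wronskian \<psi>m \<psi> + \<psi>m (Suc n) * \<psi> n) \<longlonglongrightarrow> wronskian \<psi>m \<psi>"
    using tendsto_add[OF tendsto_const] by fastforce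
  then have "(\<lambda>n. \<psi>m n * \<psi> (Suc n) / (e n * \<psi>m n)) \<longlonglongrightarrow> wronskian \<psi>m \<psi> / 1"
    using wronskian_const[OF solution sol]
    by (intro tendsto_divide normalized) (simp_all add: algebra_simps)
  then have "(\<lambda>n. \<psi>m n * \<psi> (Suc n) / (e n * \<psi>m n)) \<longlonglongrightarrow> wronskian \<psi>m \<psi>" by simp
  then show ?thesis
  proof (rule Lim_transform_eventually)
    show "\<forall>\<^sub>F n in sequentially. \<psi>m n * \<psi> (Suc n) / (e n * \<psi>m n) = \<psi> (Suc n) / e n"
      using eventually_decaying_bounds by eventually_elim (simp add: field_simps)
  qed
qed

lemma eventually_abs_increasing:
  assumes W: "wronskian \<psi>m \<psi> \<noteq> 0"
  shows "\<forall>\<^sub>F n in sequentially. \<bar>\<psi> n\<bar> < \<bar>\<psi> (Suc n)\<bar>"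
proof -
  let ?W = "\<bar>wronskian \<psi>m \<psi>\<bar>"
  have L: "(\<lambda>n. \<bar>\<psi> (Suc n) / e n\<bar>) \<longlonglongrightarrow> ?W"
    by (intro tendsto_rabs solution_next_div_e_tendsto_wronskian)
  have "(\<lambda>n. \<bar>\<psi> (Suc n) / e n\<bar> / \<bar>\<psi> (Suc (Suc n)) / e (Suc n)\<bar> * (e n / e (Suc n)))
      \<longlonglongrightarrow> ?W / ?W * 0"
    using W by (intro tendsto_mult tendsto_divide L LIMSEQ_Suc[OF L] e_ratio) auto
  then have "\<forall>\<^sub>F n in sequentially.
      \<bar>\<psi> (Suc n) / e n\<bar> / \<bar>\<psi> (Suc (Suc n)) / e (Suc n)\<bar> * (e n / e (Suc n)) < 1"
    by (rule order_tendstoD) simp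
  moreover have "\<forall>\<^sub>F n in sequentially. 0 < \<bar>\<psi> (Suc (Suc n)) / e (Suc n)\<bar>"
    using order_tendstoD(1)[OF LIMSEQ_Suc[OF L]] W by simp
  ultimately have "\<forall>\<^sub>F n in sequentially. \<bar>\<psi> (Suc n)\<bar> < \<bar>\<psi> (Suc (Suc n))\<bar>"
  proof eventually_elim
    case (elim n)
    then show ?case
      using e_pos[of n] e_pos[of "Suc n"] by (simp add: abs_divide field_simps)
  qed
  then show ?thesis by (rule eventually_sequentially_Suc[THEN iffD1])
qed

lemma abs_div_power_at_top:
  assumes W: "wronskian \<psi>m \<psi> \<noteq> 0" and C: "C > 0"
  shows "filterlim (\<lambda>n. \<bar>\<psi> n\<bar> / C ^ n) at_top sequentially"
proof -
  have "((\<lambda>n. \<bar>\<psi> (Suc n) / e n\<bar> / C) \<longlongrightarrow> \<bar>wronskian \<psi>m \<psi>\<bar> / C) sequentially"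
    by (intro tendsto_divide tendsto_rabs solution_next_div_e_tendsto_wronskian) (use C in simp_all)
  then have "filterlim (\<lambda>n. \<bar>\<psi> (Suc n) / e n\<bar> / C * (e n / C ^ n)) at_top sequentially"
    by (rule filterlim_tendsto_pos_mult_at_top[OF _ _ e_div_power_at_top[OF C]]) (use W C in simp)
  moreover have "\<bar>\<psi> (Suc n) / e n\<bar> / C * (e n / C ^ n) = \<bar>\<psi> (Suc n)\<bar> / C ^ Suc n" for n
    using e_pos[of n] C by (simp add: abs_divide)
  ultimately have "filterlim (\<lambda>n. \<bar>\<psi> (Suc n)\<bar> / C ^ Suc n) at_top sequentially" by simp
  then show ?thesis by (rule filterlim_sequentially_Suc[THEN iffD1])
qed

end

lemma wronskian_ne_0_if_independent:
  assumes sol: "is_solution V \<psi>"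
    and indep: "\<forall>\<alpha> \<beta>. (\<forall>n. \<alpha> * \<psi> n + \<beta> * \<psi>m n = 0) \<longrightarrow> \<alpha> = 0 \<and> \<beta> = 0"
  shows "wronskian \<psi>m \<psi> \<noteq> 0"
proof
  assume "wronskian \<psi>m \<psi> = 0"
  obtain j where "\<psi>m j \<noteq> 0"
    using eventually_happens[OF eventually_decaying_bounds] by auto
  then have "\<psi> n = \<psi> j / \<psi>m j * \<psi>m n" for n
    by (rule solution_proportional_if_wronskian_eq_0[OF solution sol \<open>wronskian \<psi>m \<psi> = 0\<close>])
  then have "\<forall>n. 1 * \<psi> n + (- (\<psi> j / \<psi>m j)) * \<psi>m n = 0"
    by (metis add.right_inverse mult_1 mult_minus_left)
  then have "(1::real) = 0 \<and> - (\<psi> j / \<psi>m j) = 0" by (rule indep[THEN spec, THEN spec, THEN mp])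
  then show False by simp
qed

end

lemma decaying_solution_powr:
  assumes "a > 1" and "b > 1" and "is_solution V \<psi>m"
    and "(\<lambda>n. a powr (real n powr b) * \<psi>m n) \<longlonglongrightarrow> 1"
  shows "decaying_solution V \<psi>m (\<lambda>n. a powr (real n powr b))"
proof
  show "mono (\<lambda>n. a powr (real n powr b))"
    using assms(1,2) by (intro monoI powr_mono powr_mono2) auto
  show "(\<lambda>n. a powr (real n powr b) / a powr (real (Suc n) powr b)) \<longlonglongrightarrow> 0"
    using assms(1,2) by real_asymp
qed (use assms in simp_all)

theorem corollary3:
  fixes V \<psi>m :: "nat \<Rightarrow> real" and a b :: real
  assumes "a > 1" and "b > 1"
    and "is_solution V \<psi>m"
    and "(\<lambda>n. a powr (real n powr b) * \<psi>m n) \<longlonglongrightarrow> 1"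
  shows
    "(\<forall>\<psi>. is_solution V \<psi> \<and>
          (\<forall>\<alpha> \<beta>. (\<forall>n. \<alpha> * \<psi> n + \<beta> * \<psi>m n = 0) \<longrightarrow> \<alpha> = 0 \<and> \<beta> = 0) \<longrightarrow>
        (eventually (\<lambda>n. \<bar>\<psi> n\<bar> < \<bar>\<psi> (Suc n)\<bar>) sequentially) \<and>
        (\<forall>C>0. filterlim (\<lambda>n. \<bar>\<psi> n\<bar> / C ^ n) at_top sequentially) \<and>
        (\<lambda>n. a powr (- (real n powr b)) * \<psi> n) \<longlonglongrightarrow> 0)
     \<and> (\<forall>\<psi>. is_solution V \<psi> \<longrightarrow> (\<exists>B. \<forall>n. \<bar>\<psi> n * \<psi>m n\<bar> \<le> B))
     \<and> (\<forall>c d \<psi>p. (c, d) \<noteq> (0, 0) \<and> zero_notin_spectrum V c d \<and>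
          is_solution V \<psi>p \<and> (\<exists>n. \<psi>p n \<noteq> 0) \<and> c * \<psi>p 1 + d * \<psi>p 2 = 0 \<longrightarrow>
          (\<exists>B. \<forall>m\<ge>1. \<forall>n\<ge>1. \<bar>green_matrix \<psi>p \<psi>m m n\<bar> \<le> B))"
proof -
  interpret decaying_solution V \<psi>m "\<lambda>n. a powr (real n powr b)"
    using assms by (rule decaying_solution_powr)
  have powr_minus_mult: "a powr (- (real n powr b)) * \<psi> n = \<psi> n / a powr (real n powr b)" for n \<psi>
    by (simp add: powr_minus divide_inverse mult.commute)
  show ?thesis
  proof (intro conjI allI impI)
    fix \<psi>
    assume indep: "is_solution V \<psi> \<and> (\<forall>\<alpha> \<beta>. (\<forall>n. \<alpha> * \<psi> n + \<beta> * \<psi>m n = 0) \<longrightarrow> \<alpha> = 0 \<and> \<beta> = 0)"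
    then have sol: "is_solution V \<psi>" ..
    have W: "wronskian \<psi>m \<psi> \<noteq> 0"
      using wronskian_ne_0_if_independent[OF sol] indep by blast
    show "\<forall>\<^sub>F n in sequentially. \<bar>\<psi> n\<bar> < \<bar>\<psi> (Suc n)\<bar>"
      using eventually_abs_increasing[OF sol W] .
    show "filterlim (\<lambda>n. \<bar>\<psi> n\<bar> / C ^ n) at_top sequentially" if "C > 0" for C
      using abs_div_power_at_top[OF sol W that] .
    show "(\<lambda>n. a powr (- (real n powr b)) * \<psi> n) \<longlonglongrightarrow> 0"
      unfolding powr_minus_mult using solution_div_e_tendsto_0[OF sol] .
  next
    fix \<psi> assume "is_solution V \<psi>"
    then show "\<exists>B. \<forall>n. \<bar>\<psi> n * \<psi>m n\<bar> \<le> B"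
      using solution_times_decaying_bounded by blast
  next
    fix c d \<psi>p assume "(c, d) \<noteq> (0, 0) \<and> zero_notin_spectrum V c d \<and> is_solution V \<psi>p \<and>
      (\<exists>n. \<psi>p n \<noteq> 0) \<and> c * \<psi>p 1 + d * \<psi>p 2 = 0"
    \<comment> \<open>In the paper the spectral hypothesis only guarantees \<open>W \<noteq> 0\<close>; here \<open>x / 0 = 0\<close> makes
      the bound hold regardless.\<close>
    then obtain K where "\<forall>i j. i \<le> j \<longrightarrow> \<bar>\<psi>p i * \<psi>m j\<bar> \<le> K"
      using solution_times_decaying_bounded by blast
    then have "\<bar>green_matrix \<psi>p \<psi>m m n\<bar> \<le> K / \<bar>wronskian \<psi>m \<psi>p\<bar>" for m n
      by (intro green_matrix_abs_le) simp
    then show "\<exists>B. \<forall>m\<ge>1. \<forall>n\<ge>1. \<bar>green_matrix \<psi>p \<psi>m m n\<bar> \<le> B" by blast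
  qed
qed

end
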